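(* Let $q$ be a prime power. For $i=1,2$, let $\mathcal{C}_i$ be an $[n,k_i,d_i]_q$ linear code with generator matrix $G_i$, and let $\mathcal{C}=\{(\mathbf{u},\mathbf{u}+\mathbf{v}):\ \mathbf{u}\in\mathcal{C}_1,\ \mathbf{v}\in\mathcal{C}_2\}\subseteq\mathbb{F}_q^{2n}$. Then: 1) $\mathcal{C}$ is a $[2n,k_1+k_2,\min\{2d_1,d_2\}]_q$ linear code with generator matrix $\begin{pmatrix} G_1 & G_1\\ O_{k_2\times n} & G_2\end{pmatrix}$. 2) (Euclidean case) Let $l_2=\dim(\mathrm{Hull}_E(\mathcal{C}_2))$. If $q=2^m$ for some $m$, or $\mathcal{C}_1$ is Euclidean self-orthogonal, then $$2\dim(\mathcal{C}_1\cap\mathcal{C}_2^{\perp_E})+l_2-k_1\le \dim(\mathrm{Hull}_E(\mathcal{C}))\le 2\dim(\mathcal{C}_1\cap\mathcal{C}_2^{\perp_E})+k_2-k_1;$$ moreover, if in addition $\mathcal{C}_2$ is Euclidean self-orthogonal, then $\dim(\mathrm{Hull}_E(\mathcal{C}))=2\dim(\mathcal{C}_1\cap\mathcal{C}_2^{\perp_E})+k_2-k_1$. 3) (Hermitian case, $q$ an even power of a prime) Let $l_2=\dim(\mathrm{Hull}_H(\mathcal{C}_2))$. If $q=2^m$ for some $m$, or $\mathcal{C}_1$ is Hermitian self-orthogonal, then $$2\dim(\mathcal{C}_1\cap\mathcal{C}_2^{\perp_H})+l_2-k_1\le \dim(\mathrm{Hull}_H(\mathcal{C}))\le 2\dim(\mathcal{C}_1\cap\mathcal{C}_2^{\perp_H})+k_2-k_1;$$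 moreover, if in addition $\mathcal{C}_2$ is Hermitian self-orthogonal, then $\dim(\mathrm{Hull}_H(\mathcal{C}))=2\dim(\mathcal{C}_1\cap\mathcal{C}_2^{\perp_H})+k_2-k_1$.
   Context: An $[n,k,d]_q$ code is a $k$-dimensional subspace of $\mathbb{F}_q^n$ with minimum Hamming distance $d$. Euclidean inner product $(\mathbf{x},\mathbf{y})_E=\sum_i x_iy_i$; when $q=p^h$ with $h$ even, Hermitian inner product $(\mathbf{x},\mathbf{y})_H=\sum_i x_iy_i^{\sqrt q}$. $\mathcal{C}^{\perp_E},\mathcal{C}^{\perp_H}$ are the corresponding duals, $\mathrm{Hull}_E(\mathcal{C})=\mathcal{C}\cap\mathcal{C}^{\perp_E}$, $\mathrm{Hull}_H(\mathcal{C})=\mathcal{C}\cap\mathcal{C}^{\perp_H}$. A code is Euclidean (resp. Hermitian) self-orthogonal if $\mathcal{C}\subseteq\mathcal{C}^{\perp_E}$ (resp. $\mathcal{C}\subseteq\mathcal{C}^{\perp_H}$). *)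

theory Defs
  imports "Jordan_Normal_Form.VS_Connect"
begin

text \<open>Vectors of F_q^n are JNF vectors in carrier_vec n over a finite field 'a (q = CARD('a)).\<close>

definition linear_code :: "nat \<Rightarrow> 'a::field vec set \<Rightarrow> bool" where
  "linear_code n C \<longleftrightarrow> subspace (class_ring :: 'a ring) C (module_vec TYPE('a) n)"

definition code_dim :: "nat \<Rightarrow> 'a::field vec set \<Rightarrow> nat" where
  "code_dim n C = vectorspace.dim (class_ring :: 'a ring) ((module_vec TYPE('a) n)\<lparr>carrier := C\<rparr>)"

definition hamming_dist :: "'a::zero vec \<Rightarrow> 'a vec \<Rightarrow> nat" where
  "hamming_dist x y = card {i. i < dim_vec x \<and> x $ i \<noteq> y $ i}"

text \<open>d is the minimum Hamming distance of C (requires C to have two distinct codewords).\<close>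
definition min_distance :: "'a::zero vec set \<Rightarrow> nat \<Rightarrow> bool" where
  "min_distance C d \<longleftrightarrow>
     (\<exists>x\<in>C. \<exists>y\<in>C. x \<noteq> y \<and> hamming_dist x y = d) \<and>
     (\<forall>x\<in>C. \<forall>y\<in>C. x \<noteq> y \<longrightarrow> d \<le> hamming_dist x y)"

definition is_code :: "nat \<Rightarrow> nat \<Rightarrow> nat \<Rightarrow> 'a::field vec set \<Rightarrow> bool" where
  "is_code n k d C \<longleftrightarrow> linear_code n C \<and> code_dim n C = k \<and> min_distance C d"

definition is_gen_matrix :: "nat \<Rightarrow> nat \<Rightarrow> 'a::field mat \<Rightarrow> 'a vec set \<Rightarrow> bool" where
  "is_gen_matrix n k G C \<longleftrightarrow>
     G \<in> carrier_mat k n \<and> distinct (rows G) \<and>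
     \<not> LinearCombinations.module.lin_dep (class_ring :: 'a ring) (module_vec TYPE('a) n) (set (rows G)) \<and>
     LinearCombinations.module.span (class_ring :: 'a ring) (module_vec TYPE('a) n) (set (rows G)) = C"

definition dual_E :: "nat \<Rightarrow> 'a::field vec set \<Rightarrow> 'a vec set" where
  "dual_E n C = {x \<in> carrier_vec n. \<forall>y\<in>C. x \<bullet> y = 0}"

text \<open>Hermitian inner product with conjugation y \<mapsto> y^r, where r = sqrt q.\<close>
definition herm_prod :: "nat \<Rightarrow> 'a::field vec \<Rightarrow> 'a vec \<Rightarrow> 'a" where
  "herm_prod r x y = (\<Sum>i<dim_vec x. x $ i * (y $ i) ^ r)"

definition dual_H :: "nat \<Rightarrow> nat \<Rightarrow> 'a::field vec set \<Rightarrow> 'a vec set" where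
  "dual_H r n C = {x \<in> carrier_vec n. \<forall>y\<in>C. herm_prod r x y = 0}"

definition hull_E :: "nat \<Rightarrow> 'a::field vec set \<Rightarrow> 'a vec set" where
  "hull_E n C = C \<inter> dual_E n C"

definition hull_H :: "nat \<Rightarrow> nat \<Rightarrow> 'a::field vec set \<Rightarrow> 'a vec set" where
  "hull_H r n C = C \<inter> dual_H r n C"

definition self_orth_E :: "nat \<Rightarrow> 'a::field vec set \<Rightarrow> bool" where
  "self_orth_E n C \<longleftrightarrow> C \<subseteq> dual_E n C"

definition self_orth_H :: "nat \<Rightarrow> nat \<Rightarrow> 'a::field vec set \<Rightarrow> bool" where
  "self_orth_H r n C \<longleftrightarrow> C \<subseteq> dual_H r n C"

definition uuv :: "'a::field vec set \<Rightarrow> 'a vec set \<Rightarrow> 'a vec set" where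
  "uuv C1 C2 = {u @\<^sub>v (u + v) | u v. u \<in> C1 \<and> v \<in> C2}"

end

theory Submission
  imports Defs "Jordan_Normal_Form.Matrix_Kernel" "Jordan_Normal_Form.DL_Rank"
    "HOL-Library.Set_Algebras" "HOL-Number_Theory.Residues"
begin

text \<open>
  Over a field with q elements a linear code of dimension k has exactly q^k codewords, so all
  dimension identities are proved by counting. The Euclidean and the Hermitian form are both of
  the shape <x, y> = \<Sum>i. x_i \<sigma>(y_i) for an involutive field automorphism \<sigma>
  (the identity, resp. y \<mapsto> y^(sqrt q)), and the hull of the (u | u + v) code is computed
  once for all such \<sigma>.

  Since <(u, u + v), (u', u' + v')> = 2<u, u'> + <v, u'> + <u + v, v'> and 2<u, u'> = 0 under
  either hypothesis (characteristic 2, or C1 self-orthogonal), the word (u, u + v) lies in the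
  hull iff v \<in> C1^\<bottom> and u + v \<in> C2^\<bottom>. Projecting onto v, whose fibres are cosets
  of C1 \<inter> C2^\<bottom>, gives dim Hull = dim (C1 \<inter> C2^\<bottom>) + dim I with
  I = C2 \<inter> C1^\<bottom> \<inter> (C1 + C2^\<bottom>). Now Hull(C2) \<inter> C1^\<bottom> \<subseteq> I \<subseteq> C2 \<inter> C1^\<bottom>,
  with equality on the right if C2 is self-orthogonal; and
  dim (C2 \<inter> C1^\<bottom>) = k2 - k1 + dim (C1 \<inter> C2^\<bottom>), because C2 \<inter> C1^\<bottom> = (C1 + C2^\<bottom>)^\<bottom>.
  Grassmann's formula turns the left inclusion into the lower bound.
\<close>

lemma linear_code_iff:
  "linear_code n (C :: 'a::field vec set) \<longleftrightarrow>
    C \<subseteq> carrier_vec n \<and> 0\<^sub>v n \<in> C \<and> (\<forall>x\<in>C. \<forall>y\<in>C. x + y \<in> C) \<and> (\<forall>c. \<forall>x\<in>C. c \<cdot>\<^sub>v x \<in> C)"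
  (is "_ \<longleftrightarrow> ?closed")
proof
  assume "linear_code n C"
  then interpret subspace "class_ring :: 'a ring" C "module_vec TYPE('a) n"
    unfolding linear_code_def .
  show ?closed
    using submod unfolding submodule_def subgroup_def
    by (auto simp: module_vec_simps class_ring_simps)
next
  assume closed: ?closed
  interpret vec_space "TYPE('a)" n .
  have "submodule class_ring C (module_vec TYPE('a) n)"
    by (rule submodule.intro) (use closed vec_module in \<open>auto simp: module_vec_simps class_ring_simps\<close>)
  then show "linear_code n C"
    unfolding linear_code_def by (simp add: VectorSpace.subspace_def vec_vs)
qed

lemma linear_code_carrier: "linear_code n C \<Longrightarrow> C \<subseteq> carrier_vec n"
  by (simp add: linear_code_iff)

lemma linear_code_zero: "linear_code n C \<Longrightarrow> 0\<^sub>v n \<in> C"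
  by (simp add: linear_code_iff)

lemma linear_code_add: "linear_code n C \<Longrightarrow> x \<in> C \<Longrightarrow> y \<in> C \<Longrightarrow> x + y \<in> C"
  by (simp add: linear_code_iff)

lemma linear_code_smult: "linear_code n C \<Longrightarrow> x \<in> C \<Longrightarrow> c \<cdot>\<^sub>v x \<in> C"
  by (simp add: linear_code_iff)

lemma linear_code_dim_vec: "linear_code n C \<Longrightarrow> x \<in> C \<Longrightarrow> dim_vec x = n"
  using linear_code_carrier by (metis carrier_vecD subsetD)

lemma linear_code_uminus:
  assumes "linear_code n C" "x \<in> C"
  shows "- x \<in> C"
proof -
  have "- x = (- 1) \<cdot>\<^sub>v x" by (intro eq_vecI) auto
  then show ?thesis using linear_code_smult[OF assms] by simp
qed

lemma linear_code_diff:
  assumes "linear_code n C" "x \<in> C" "y \<in> C"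
  shows "x - y \<in> C"
proof -
  have "x - y = x + - y"
    using assms linear_code_carrier by (intro minus_add_uminus_vec) auto
  then show ?thesis using linear_code_add[OF assms(1,2) linear_code_uminus[OF assms(1,3)]] by simp
qed

lemma linear_code_Int: "linear_code n X \<Longrightarrow> linear_code n Y \<Longrightarrow> linear_code n (X \<inter> Y)"
  by (auto simp: linear_code_iff)

lemma linear_code_set_plus:
  assumes X: "linear_code n X" and Y: "linear_code n Y"
  shows "linear_code n (X + Y)"
proof -
  have carrier: "x \<in> carrier_vec n" if "x \<in> X \<union> Y" for x
    using that linear_code_carrier[OF X] linear_code_carrier[OF Y] by auto
  show ?thesis
    unfolding linear_code_iff
  proof (intro conjI ballI allI)
    show "X + Y \<subseteq> carrier_vec n"
      using carrier by (auto elim!: set_plus_elim)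
    show "0\<^sub>v n \<in> X + Y"
      using set_plus_intro[OF linear_code_zero[OF X] linear_code_zero[OF Y]] by simp
    fix a b assume "a \<in> X + Y" "b \<in> X + Y"
    then obtain x y x' y' where "a = x + y" "b = x' + y'" "x \<in> X" "y \<in> Y" "x' \<in> X" "y' \<in> Y"
      by (auto elim!: set_plus_elim)
    moreover from this have "a + b = (x + x') + (y + y')"
      using carrier[of x] carrier[of y] carrier[of x'] carrier[of y'] by (intro eq_vecI) auto
    ultimately show "a + b \<in> X + Y"
      using linear_code_add[OF X] linear_code_add[OF Y] by auto
  next
    fix c a assume "a \<in> X + Y"
    then obtain x y where "a = x + y" "x \<in> X" "y \<in> Y"
      by (auto elim!: set_plus_elim)
    moreover from this have "c \<cdot>\<^sub>v a = c \<cdot>\<^sub>v x + c \<cdot>\<^sub>v y"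
      using carrier[of x] carrier[of y] by (intro eq_vecI) (auto simp: distrib_left)
    ultimately show "c \<cdot>\<^sub>v a \<in> X + Y"
      using linear_code_smult[OF X] linear_code_smult[OF Y] by auto
  qed
qed

lemma subset_set_plus_linear_code:
  assumes X: "linear_code n X" and Y: "linear_code n Y"
  shows "X \<subseteq> X + Y" "Y \<subseteq> X + Y"
proof -
  show "X \<subseteq> X + Y"
  proof
    fix x assume x: "x \<in> X"
    have "x + 0\<^sub>v n \<in> X + Y" using set_plus_intro[OF x linear_code_zero[OF Y]] .
    moreover have "x \<in> carrier_vec n" using x linear_code_carrier[OF X] by blast
    ultimately show "x \<in> X + Y" by simp
  qed
  show "Y \<subseteq> X + Y"
  proof
    fix y assume y: "y \<in> Y"
    have "0\<^sub>v n + y \<in> X + Y" using set_plus_intro[OF linear_code_zero[OF X] y] .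
    moreover have "y \<in> carrier_vec n" using y linear_code_carrier[OF Y] by blast
    ultimately show "y \<in> X + Y" by simp
  qed
qed

lemma set_plus_subset_linear_code:
  assumes "linear_code n C" "X \<subseteq> C" "Y \<subseteq> C"
  shows "X + Y \<subseteq> C"
proof
  fix z assume "z \<in> X + Y"
  then obtain x y where "z = x + y" "x \<in> X" "y \<in> Y" by (auto elim: set_plus_elim)
  then show "z \<in> C" using linear_code_add[OF assms(1)] assms(2,3) by blast
qed

lemma finite_carrier_vec: "finite (carrier_vec n :: 'a::finite vec set)"
proof -
  have "carrier_vec n \<subseteq> (\<lambda>f. vec n f) ` ({0..<n} \<rightarrow>\<^sub>E (UNIV :: 'a set))"
  proof
    fix v :: "'a vec" assume "v \<in> carrier_vec n"
    then show "v \<in> (\<lambda>f. vec n f) ` ({0..<n} \<rightarrow>\<^sub>E UNIV)"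
      by (intro image_eqI[where x = "restrict (($) v) {0..<n}"] eq_vecI) auto
  qed
  then show ?thesis by (rule finite_subset) (simp add: finite_PiE)
qed

lemma finite_linear_code: "linear_code n (C :: 'a::{finite,field} vec set) \<Longrightarrow> finite C"
  using finite_subset[OF linear_code_carrier finite_carrier_vec] .

lemma (in vectorspace) fin_dim_if_finite_carrier:
  assumes "finite (carrier V)"
  shows fin_dim
  unfolding fin_dim_def
proof (intro exI conjI)
  show "gen_set (carrier V)"
    using span_is_subset2[of "carrier V"] in_own_span[of "carrier V"] by auto
qed (use assms in auto)

lemma (in vectorspace) card_carrier_eq_power_dim:
  assumes fin: "finite (carrier V)"
  shows "card (carrier V) = card (carrier K) ^ dim"
proof -
  obtain \<beta> where \<beta>: "finite \<beta>" "basis \<beta>"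
    using finite_basis_exists[OF fin_dim_if_finite_carrier[OF fin]] by blast
  have \<beta>_carrier: "\<beta> \<subseteq> carrier V" using \<beta>(2) unfolding basis_def by blast
  have unique: "\<exists>!a. a \<in> \<beta> \<rightarrow>\<^sub>E carrier K \<and> lincomb a \<beta> = v" if "v \<in> carrier V" for v
    using basis_criterion[OF \<beta>(1) \<beta>_carrier] \<beta>(2) that by blast
  have closed: "lincomb a \<beta> \<in> carrier V" if "a \<in> \<beta> \<rightarrow>\<^sub>E carrier K" for a
    using that lincomb_closed[OF \<beta>_carrier] by (simp add: PiE_iff)
  have "bij_betw (\<lambda>a. lincomb a \<beta>) (\<beta> \<rightarrow>\<^sub>E carrier K) (carrier V)"
  proof (rule bij_betwI')
    fix a b assume a: "a \<in> \<beta> \<rightarrow>\<^sub>E carrier K" and b: "b \<in> \<beta> \<rightarrow>\<^sub>E carrier K"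
    have "\<exists>\<^sub>\<le>\<^sub>1c. c \<in> \<beta> \<rightarrow>\<^sub>E carrier K \<and> lincomb c \<beta> = lincomb a \<beta>"
      using unique[OF closed[OF a]] by (simp add: ex1_iff_ex_Uniq)
    then show "lincomb a \<beta> = lincomb b \<beta> \<longleftrightarrow> a = b"
      using a b by (auto dest: Uniq_D)
  next
    show "lincomb a \<beta> \<in> carrier V" if "a \<in> \<beta> \<rightarrow>\<^sub>E carrier K" for a
      using closed[OF that] .
  next
    fix v assume "v \<in> carrier V"
    then obtain a where "a \<in> \<beta> \<rightarrow>\<^sub>E carrier K" "lincomb a \<beta> = v"
      using unique by blast
    then show "\<exists>a \<in> \<beta> \<rightarrow>\<^sub>E carrier K. v = lincomb a \<beta>" by auto
  qed
  then have "card (carrier V) = card (\<beta> \<rightarrow>\<^sub>E carrier K)"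
    by (simp add: bij_betw_same_card)
  also have "\<dots> = card (carrier K) ^ dim"
    using \<beta> by (simp add: card_PiE dim_basis)
  finally show ?thesis .
qed

lemma card_linear_code:
  fixes C :: "'a::{finite,field} vec set"
  assumes "linear_code n C"
  shows "card C = card (UNIV :: 'a set) ^ code_dim n C"
proof -
  interpret vec_space "TYPE('a)" n .
  interpret C: vectorspace class_ring "vs C"
    using subspace_is_vs assms unfolding linear_code_def .
  show ?thesis
    using C.card_carrier_eq_power_dim finite_linear_code[OF assms]
    unfolding code_dim_def by (simp add: class_ring_simps)
qed

lemma one_less_card_UNIV: "1 < card (UNIV :: 'a::{finite,field} set)"
proof -
  have "card {0, 1 :: 'a} \<le> card (UNIV :: 'a set)" by (rule card_mono) auto
  then show ?thesis by simp
qed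

lemma power_card_UNIV_inject [simp]:
  "card (UNIV :: 'a::{finite,field} set) ^ a = card (UNIV :: 'a set) ^ b \<longleftrightarrow> a = b"
  using one_less_card_UNIV[where 'a = 'a] by simp

lemma power_card_UNIV_le_iff [simp]:
  "card (UNIV :: 'a::{finite,field} set) ^ a \<le> card (UNIV :: 'a set) ^ b \<longleftrightarrow> a \<le> b"
  using one_less_card_UNIV[where 'a = 'a] by simp

lemma linear_code_basisE:
  fixes C :: "'a::{finite,field} vec set"
  assumes "linear_code n C"
  obtains \<beta> where "finite \<beta>" "\<beta> \<subseteq> C"
    "\<not> LinearCombinations.module.lin_dep (class_ring :: 'a ring) (module_vec TYPE('a) n) \<beta>"
    "LinearCombinations.module.span (class_ring :: 'a ring) (module_vec TYPE('a) n) \<beta> = C"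
    "card \<beta> = code_dim n C"
proof -
  interpret vec_space "TYPE('a)" n .
  have sub: "VectorSpace.subspace class_ring C V" using assms unfolding linear_code_def .
  interpret C: vectorspace class_ring "vs C" using subspace_is_vs[OF sub] .
  obtain \<beta> where \<beta>: "finite \<beta>" "C.basis \<beta>"
    using C.finite_basis_exists C.fin_dim_if_finite_carrier finite_linear_code[OF assms] by auto
  have \<beta>_C: "\<beta> \<subseteq> C" using \<beta>(2) unfolding C.basis_def by simp
  have "submodule class_ring C V" using sub by simp
  note same = span_li_not_depend[OF \<beta>_C this]
  show ?thesis
  proof (rule that[OF \<beta>(1) \<beta>_C])
    show "\<not> lin_dep \<beta>" "span \<beta> = C"
      using \<beta>(2) same sub unfolding C.basis_def by auto
    show "card \<beta> = code_dim n C"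
      unfolding code_dim_def C.dim_basis[OF \<beta>, symmetric] by simp
  qed
qed

lemma linear_code_dual_E:
  assumes "S \<subseteq> carrier_vec n"
  shows "linear_code n (dual_E n S)"
  using assms unfolding linear_code_iff dual_E_def
  by (auto simp: add_scalar_prod_distrib[of _ n])

lemma kernel_dim_lin_indpt_rows:
  fixes M :: "'a::field mat"
  assumes M: "M \<in> carrier_mat k n" and distinct: "distinct (rows M)"
    and indpt: "\<not> LinearCombinations.module.lin_dep class_ring (module_vec TYPE('a) n) (set (rows M))"
  shows "kernel_dim M = n - k"
proof -
  interpret vec_space "TYPE('a)" n .
  define R where "R = gauss_jordan_single M"
  note gj = gauss_jordan_single[OF M R_def[symmetric]]
  obtain P Q where PQ: "R = P * M" "P \<in> carrier_mat k k" "Q \<in> carrier_mat k k" "P * Q = 1\<^sub>m k"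
    using gj(4) by blast
  obtain f where pivot: "pivot_fun R f n"
    using gj(2,3) unfolding row_echelon_form_def by auto
  \<comment> \<open>R = P M with P invertible: a zero row of R is a nontrivial relation among the rows of M.\<close>
  have "row R i \<noteq> 0\<^sub>v n" if i: "i < k" for i
  proof
    assume zero: "row R i = 0\<^sub>v n"
    have P_i: "row P i \<in> carrier_vec k" using PQ(2) i by auto
    have "row P i \<noteq> 0\<^sub>v k"
    proof
      assume "row P i = 0\<^sub>v k"
      then have "(P * Q) $$ (i, i) = 0" using PQ(2,3) i by simp
      then show False using PQ(4) i by simp
    qed
    moreover have "M\<^sup>T *\<^sub>v row P i = row R i"
    proof (rule eq_vecI)
      fix j assume "j < dim_vec (row R i)"
      then have j: "j < n" using gj(2) by simp
      have "(M\<^sup>T *\<^sub>v row P i) $ j = row P i \<bullet> col M j"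
        using j M P_i comm_scalar_prod[of "col M j" k "row P i"] by simp
      then show "(M\<^sup>T *\<^sub>v row P i) $ j = row R i $ j"
        using PQ(1,2) M i j by simp
    qed (use M gj(2) in simp)
    ultimately have "lin_dep (set (cols M\<^sup>T))"
      using lin_depI[of "M\<^sup>T" k "row P i"] M P_i zero distinct by simp
    then show False using indpt by simp
  qed
  then have "{i. i < k \<and> row R i \<noteq> 0\<^sub>v n} = {..<k}" by auto
  then have "length (pivot_positions R) = k"
    using pivot_positions(4)[OF gj(2) pivot] by simp
  then show ?thesis
    using kernel_dim_code[of M] M unfolding R_def by simp
qed

lemma dual_E_rows_eq_mat_kernel:
  assumes M: "M \<in> carrier_mat k n"
  shows "dual_E n (set (rows M)) = mat_kernel M"
proof -
  have "(\<forall>y\<in>set (rows M). x \<bullet> y = 0) \<longleftrightarrow> M *\<^sub>v x = 0\<^sub>v k" if x: "x \<in> carrier_vec n" for x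
  proof -
    have "x \<bullet> row M i = (M *\<^sub>v x) $ i" if "i < k" for i
      using that M comm_scalar_prod[OF x, of "row M i"] by auto
    then show ?thesis
      using M by (auto simp: rows_def vec_eq_iff)
  qed
  then show ?thesis
    unfolding dual_E_def mat_kernel[OF M] by auto
qed

lemma code_dim_dual_E:
  fixes C :: "'a::{finite,field} vec set"
  assumes C: "linear_code n C"
  shows "code_dim n (dual_E n C) + code_dim n C = n"
proof -
  interpret vec_space "TYPE('a)" n .
  obtain \<beta> where \<beta>: "finite \<beta>" "\<beta> \<subseteq> C" "\<not> lin_dep \<beta>" "span \<beta> = C" "card \<beta> = code_dim n C"
    using linear_code_basisE[OF C] by blast
  obtain bs where bs: "set bs = \<beta>" "distinct bs"
    using finite_distinct_list[OF \<beta>(1)] by blast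
  have bs_carrier: "set bs \<subseteq> carrier_vec n"
    using bs(1) \<beta>(2) linear_code_carrier[OF C] by auto
  define M where "M = mat_of_rows n bs"
  have "length bs = card \<beta>"
    using bs distinct_card by fastforce
  then have M: "M \<in> carrier_mat (card \<beta>) n" and rows_M: "rows M = bs"
    unfolding M_def using bs_carrier by auto
  have "dual_E n C = orthogonal_complement (span \<beta>)"
    unfolding \<beta>(4) dual_E_def orthogonal_complement_def by auto
  also have "\<dots> = orthogonal_complement \<beta>"
    using bs_carrier bs(1) by simp
  also have "\<dots> = dual_E n (set (rows M))"
    unfolding rows_M bs(1) dual_E_def orthogonal_complement_def by auto
  also have "\<dots> = mat_kernel M"
    using dual_E_rows_eq_mat_kernel[OF M] .
  finally have "code_dim n (dual_E n C) = kernel_dim M"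
    using M unfolding kernel_dim_def code_dim_def by simp
  also have "\<dots> = n - card \<beta>"
    using kernel_dim_lin_indpt_rows[OF M] rows_M bs \<beta>(3) by simp
  finally have "code_dim n (dual_E n C) = n - card \<beta>" .
  moreover have "card \<beta> \<le> n"
    using li_le_dim(2)[OF fin_dim _ \<beta>(3)] bs_carrier bs(1) by (simp add: dim_is_n)
  ultimately show ?thesis
    using \<beta>(5) by simp
qed

lemma add_left_cancel_vec:
  fixes u v v' :: "'a::cancel_semigroup_add vec"
  assumes "u \<in> carrier_vec n" "v \<in> carrier_vec n" "v' \<in> carrier_vec n"
  shows "u + v = u + v' \<longleftrightarrow> v = v'"
proof
  assume eq: "u + v = u + v'"
  show "v = v'"
  proof (rule eq_vecI)
    fix i assume "i < dim_vec v'"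
    then show "v $ i = v' $ i"
      using arg_cong[OF eq, of "\<lambda>x. x $ i"] assms by simp
  qed (use assms in simp)
qed simp

lemma mem_set_plus_iff_coset:
  assumes X: "linear_code n X" and Y: "linear_code n Y" and v: "v \<in> carrier_vec n"
  shows "v \<in> X + Y \<longleftrightarrow> (\<exists>u\<in>X. u + v \<in> Y)"
proof
  assume "v \<in> X + Y"
  then obtain x y where xy: "x \<in> X" "y \<in> Y" "v = x + y" by (auto elim!: set_plus_elim)
  then have "- x + v = y"
    by (auto intro!: eq_vecI simp: linear_code_dim_vec[OF X] linear_code_dim_vec[OF Y])
  then show "\<exists>u\<in>X. u + v \<in> Y" using xy linear_code_uminus[OF X] by metis
next
  assume "\<exists>u\<in>X. u + v \<in> Y"
  then obtain u where u: "u \<in> X" "u + v \<in> Y" by blast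
  then have "v = - u + (u + v)"
    using v by (auto intro!: eq_vecI simp: linear_code_dim_vec[OF X])
  then show "v \<in> X + Y" using u linear_code_uminus[OF X] set_plus_intro by metis
qed

lemma card_coset:
  assumes X: "linear_code n X" and Y: "linear_code n Y" and v: "v \<in> carrier_vec n"
    and u\<^sub>0: "u\<^sub>0 \<in> X" "u\<^sub>0 + v \<in> Y"
  shows "card {u \<in> X. u + v \<in> Y} = card (X \<inter> Y)"
proof -
  note dims = linear_code_dim_vec[OF X] linear_code_dim_vec[OF Y] carrier_vecD[OF v]
  have "{u \<in> X. u + v \<in> Y} = (\<lambda>w. u\<^sub>0 + w) ` (X \<inter> Y)"
  proof (intro Set.set_eqI iffI)
    fix u assume u: "u \<in> {u \<in> X. u + v \<in> Y}"
    have "u - u\<^sub>0 = (u + v) - (u\<^sub>0 + v)" and "u = u\<^sub>0 + (u - u\<^sub>0)"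
      using u u\<^sub>0 by (auto intro!: eq_vecI simp: dims)
    moreover have "u - u\<^sub>0 \<in> X" "(u + v) - (u\<^sub>0 + v) \<in> Y"
      using u u\<^sub>0 linear_code_diff[OF X] linear_code_diff[OF Y] by auto
    ultimately show "u \<in> (\<lambda>w. u\<^sub>0 + w) ` (X \<inter> Y)" by auto
  next
    fix u assume "u \<in> (\<lambda>w. u\<^sub>0 + w) ` (X \<inter> Y)"
    then obtain w where w: "w \<in> X \<inter> Y" "u = u\<^sub>0 + w" by blast
    then have "u + v = (u\<^sub>0 + v) + w"
      using u\<^sub>0 by (auto intro!: eq_vecI simp: dims)
    then show "u \<in> {u \<in> X. u + v \<in> Y}"
      using w u\<^sub>0 linear_code_add[OF X] linear_code_add[OF Y] by auto
  qed
  moreover have "inj_on (\<lambda>w. u\<^sub>0 + w) (X \<inter> Y)"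
    using add_left_cancel_vec u\<^sub>0 linear_code_carrier[OF X] by (intro inj_onI) blast
  ultimately show ?thesis by (simp add: card_image)
qed

lemma card_Sigma_coset:
  fixes X Y :: "'a::{finite,field} vec set"
  assumes X: "linear_code n X" and Y: "linear_code n Y"
    and S: "finite S" "S \<subseteq> carrier_vec n"
  shows "card (SIGMA v:S. {u \<in> X. u + v \<in> Y}) = card (S \<inter> (X + Y)) * card (X \<inter> Y)"
proof -
  have fibre: "card {u \<in> X. u + v \<in> Y} = (if v \<in> X + Y then card (X \<inter> Y) else 0)"
    if "v \<in> S" for v
  proof -
    have v: "v \<in> carrier_vec n" using that S by auto
    show ?thesis
      using card_coset[OF X Y v] mem_set_plus_iff_coset[OF X Y v] by (auto simp: card_eq_0_iff)
  qed
  have "card (SIGMA v:S. {u \<in> X. u + v \<in> Y}) = (\<Sum>v\<in>S. card {u \<in> X. u + v \<in> Y})"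
    using S(1) finite_linear_code[OF X] by (simp add: card_SigmaI)
  also have "\<dots> = (\<Sum>v\<in>S. if v \<in> X + Y then card (X \<inter> Y) else 0)"
    using fibre by simp
  also have "\<dots> = card (S \<inter> (X + Y)) * card (X \<inter> Y)"
    using S(1) by (simp add: sum.If_cases Int_def)
  finally show ?thesis .
qed

lemma card_set_plus_Int:
  fixes X Y :: "'a::{finite,field} vec set"
  assumes X: "linear_code n X" and Y: "linear_code n Y"
  shows "card (X + Y) * card (X \<inter> Y) = card X * card Y"
proof -
  have XY: "linear_code n (X + Y)" using linear_code_set_plus[OF X Y] .
  note dims = linear_code_dim_vec[OF X] linear_code_dim_vec[OF Y] linear_code_dim_vec[OF XY]
  let ?pair = "\<lambda>(v, u). (u, u + v)"
  have "X \<times> Y = ?pair ` (SIGMA v:X + Y. {u \<in> X. u + v \<in> Y})"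
  proof (intro Set.set_eqI iffI)
    fix p assume "p \<in> X \<times> Y"
    then obtain x y where xy: "p = (x, y)" "x \<in> X" "y \<in> Y" by blast
    have "y - x = - x + y" "x + (- x + y) = y"
      using xy by (auto intro!: eq_vecI simp: dims)
    moreover have "- x + y \<in> X + Y"
      using xy linear_code_uminus[OF X] by (auto intro: set_plus_intro)
    ultimately show "p \<in> ?pair ` (SIGMA v:X + Y. {u \<in> X. u + v \<in> Y})"
      using xy by (auto intro!: image_eqI[where x = "(- x + y, x)"])
  qed auto
  moreover have "inj_on ?pair (SIGMA v:X + Y. {u \<in> X. u + v \<in> Y})"
  proof (rule inj_onI, clarsimp)
    fix u v v' assume "u \<in> X" "v \<in> X + Y" "v' \<in> X + Y" "u + v = u + v'"
    then show "v = v'"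
      using add_left_cancel_vec linear_code_carrier[OF X] linear_code_carrier[OF XY] by blast
  qed
  ultimately have "card (X \<times> Y) = card (SIGMA v:X + Y. {u \<in> X. u + v \<in> Y})"
    by (simp add: card_image)
  also have "\<dots> = card (X + Y) * card (X \<inter> Y)"
    using card_Sigma_coset[OF X Y finite_linear_code[OF XY] linear_code_carrier[OF XY]] by simp
  finally show ?thesis by (simp add: card_cartesian_product)
qed

lemma code_dim_set_plus_Int:
  fixes X Y :: "'a::{finite,field} vec set"
  assumes X: "linear_code n X" and Y: "linear_code n Y"
  shows "code_dim n (X + Y) + code_dim n (X \<inter> Y) = code_dim n X + code_dim n Y"
  using card_set_plus_Int[OF X Y]
  unfolding card_linear_code[OF linear_code_set_plus[OF X Y]] card_linear_code[OF linear_code_Int[OF X Y]]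
    card_linear_code[OF X] card_linear_code[OF Y]
  by (simp add: power_add[symmetric])

lemma code_dim_mono:
  fixes X Y :: "'a::{finite,field} vec set"
  assumes "linear_code n X" "linear_code n Y" "X \<subseteq> Y"
  shows "code_dim n X \<le> code_dim n Y"
  using card_mono[OF finite_linear_code[OF assms(2)] assms(3)]
  unfolding card_linear_code[OF assms(1)] card_linear_code[OF assms(2)] by simp

lemma power_card_UNIV_eq_self:
  fixes x :: "'a::{finite,field}"
  shows "x ^ card (UNIV :: 'a set) = x"
proof (cases "x = 0")
  case False
  have "Units (class_ring :: 'a ring) = UNIV - {0}"
    using class_field.field_Units by (simp add: class_ring_simps)
  then have "x ^ (card (UNIV :: 'a set) - 1) = 1"
    using class_cring.units_power_order_eq_one[of x] False by (simp add: card_Diff_singleton)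
  moreover have "x ^ card (UNIV :: 'a set) = x * x ^ (card (UNIV :: 'a set) - 1)"
    using one_less_card_UNIV[where 'a = 'a] power_Suc[of x "card (UNIV :: 'a set) - 1"] by simp
  ultimately show ?thesis by simp
qed (use one_less_card_UNIV[where 'a = 'a] in simp)

lemma CHAR_eq_prime_if_card:
  assumes p: "prime (p :: nat)" and card: "card (UNIV :: 'a::{finite,field} set) = p ^ h"
  shows "CHAR('a) = p"
proof -
  have "prime CHAR('a)"
    using prime_CHAR_semidom finite_imp_CHAR_pos[where 'a = 'a] by simp
  moreover have "CHAR('a) dvd p"
    using CHAR_dvd_CARD[where 'a = 'a] card \<open>prime CHAR('a)\<close> prime_dvd_power by metis
  ultimately show ?thesis
    using p primes_dvd_imp_eq by blast
qed

lemma double_eq_zero_if_card_power_two: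
  assumes "card (UNIV :: 'a::{finite,field} set) = 2 ^ m"
  shows "(x :: 'a) + x = 0"
proof -
  have "CHAR('a) = 2" using CHAR_eq_prime_if_card[OF _ assms] by simp
  then have "(2 :: 'a) = 0" by (metis of_nat_CHAR of_nat_numeral)
  then show ?thesis unfolding mult_2[symmetric] by simp
qed

definition sesq_form :: "('a::field \<Rightarrow> 'a) \<Rightarrow> 'a vec \<Rightarrow> 'a vec \<Rightarrow> 'a" where
  "sesq_form \<sigma> x y = x \<bullet> map_vec \<sigma> y"

definition sesq_dual :: "('a::field \<Rightarrow> 'a) \<Rightarrow> nat \<Rightarrow> 'a vec set \<Rightarrow> 'a vec set" where
  "sesq_dual \<sigma> n C = {x \<in> carrier_vec n. \<forall>y\<in>C. sesq_form \<sigma> x y = 0}"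

lemma sesq_dual_eq_dual_E_map_vec: "sesq_dual \<sigma> n C = dual_E n (map_vec \<sigma> ` C)"
  unfolding sesq_dual_def dual_E_def sesq_form_def by auto

lemma dual_E_eq_sesq_dual: "dual_E n C = sesq_dual (\<lambda>x. x) n C"
proof -
  have "map_vec (\<lambda>x. x) y = y" for y :: "'a vec" by (intro eq_vecI) auto
  then show ?thesis unfolding sesq_dual_eq_dual_E_map_vec by simp
qed

lemma dual_H_eq_sesq_dual:
  assumes "C \<subseteq> carrier_vec n"
  shows "dual_H r n C = sesq_dual (\<lambda>y. y ^ r) n C"
proof -
  have "herm_prod r x y = sesq_form (\<lambda>y. y ^ r) x y" if "x \<in> carrier_vec n" "y \<in> C" for x y
    using that assms unfolding herm_prod_def sesq_form_def scalar_prod_def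
    by (auto simp: lessThan_atLeast0)
  then show ?thesis
    unfolding dual_H_def sesq_dual_def by auto
qed

lemma sesq_dual_antimono: "X \<subseteq> Y \<Longrightarrow> sesq_dual \<sigma> n Y \<subseteq> sesq_dual \<sigma> n X"
  unfolding sesq_dual_def by auto

lemma sesq_form_add_left:
  assumes "x \<in> carrier_vec n" "y \<in> carrier_vec n" "z \<in> carrier_vec n"
  shows "sesq_form \<sigma> (x + y) z = sesq_form \<sigma> x z + sesq_form \<sigma> y z"
  using assms unfolding sesq_form_def by (simp add: add_scalar_prod_distrib[of _ n])

locale finite_field_involution =
  fixes \<sigma> :: "'a::{finite,field} \<Rightarrow> 'a"
  assumes hom_add: "\<sigma> (x + y) = \<sigma> x + \<sigma> y"
    and hom_mult: "\<sigma> (x * y) = \<sigma> x * \<sigma> y"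
    and involutive: "\<sigma> (\<sigma> x) = x"
begin

lemma hom_zero [simp]: "\<sigma> 0 = 0"
proof -
  have "\<sigma> 0 = \<sigma> 0 + \<sigma> 0" using hom_add[of 0 0] by (simp only: add_0_right)
  then show ?thesis by (metis add_cancel_left_right)
qed

lemma hom_sum: "\<sigma> (sum f A) = (\<Sum>i\<in>A. \<sigma> (f i))"
  by (induct A rule: infinite_finite_induct) (auto simp: hom_add)

lemma map_vec_involutive [simp]: "map_vec \<sigma> (map_vec \<sigma> x) = x"
  by (intro eq_vecI) (auto simp: involutive)

lemma map_vec_zero [simp]: "map_vec \<sigma> (0\<^sub>v n) = 0\<^sub>v n"
  by (intro eq_vecI) auto

lemma sesq_form_swap:
  assumes "x \<in> carrier_vec n" "y \<in> carrier_vec n"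
  shows "sesq_form \<sigma> y x = \<sigma> (sesq_form \<sigma> x y)"
  using assms unfolding sesq_form_def scalar_prod_def
  by (simp add: hom_sum hom_mult involutive mult.commute)

lemma sesq_form_add_right:
  assumes "x \<in> carrier_vec n" "y \<in> carrier_vec n" "z \<in> carrier_vec n"
  shows "sesq_form \<sigma> x (y + z) = sesq_form \<sigma> x y + sesq_form \<sigma> x z"
proof -
  have "map_vec \<sigma> (y + z) = map_vec \<sigma> y + map_vec \<sigma> z"
    using assms by (intro eq_vecI) (auto simp: hom_add)
  then show ?thesis
    using assms unfolding sesq_form_def by (simp add: scalar_prod_add_distrib[of _ n])
qed

lemma linear_code_map_vec:
  assumes C: "linear_code n C"
  shows "linear_code n (map_vec \<sigma> ` C)"
  unfolding linear_code_iff
proof (intro conjI ballI allI)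
  show "map_vec \<sigma> ` C \<subseteq> carrier_vec n"
    using linear_code_carrier[OF C] by auto
  have "0\<^sub>v n = map_vec \<sigma> (0\<^sub>v n)" by (intro eq_vecI) auto
  then show "0\<^sub>v n \<in> map_vec \<sigma> ` C"
    using linear_code_zero[OF C] by (rule image_eqI)
next
  fix a b assume "a \<in> map_vec \<sigma> ` C" "b \<in> map_vec \<sigma> ` C"
  then obtain x y where xy: "x \<in> C" "y \<in> C" "a = map_vec \<sigma> x" "b = map_vec \<sigma> y" by blast
  then have "a + b = map_vec \<sigma> (x + y)"
    by (auto intro!: eq_vecI simp: hom_add linear_code_dim_vec[OF C])
  then show "a + b \<in> map_vec \<sigma> ` C" using xy linear_code_add[OF C] by blast
next
  fix c a assume "a \<in> map_vec \<sigma> ` C"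
  then obtain x where x: "x \<in> C" "a = map_vec \<sigma> x" by blast
  then have "c \<cdot>\<^sub>v a = map_vec \<sigma> (\<sigma> c \<cdot>\<^sub>v x)"
    by (auto intro!: eq_vecI simp: hom_mult involutive)
  then show "c \<cdot>\<^sub>v a \<in> map_vec \<sigma> ` C" using x linear_code_smult[OF C] by blast
qed

lemma code_dim_map_vec:
  assumes C: "linear_code n C"
  shows "code_dim n (map_vec \<sigma> ` C) = code_dim n C"
proof -
  have "inj_on (map_vec \<sigma>) C"
  proof (rule inj_onI)
    fix x y assume "map_vec \<sigma> x = map_vec \<sigma> y"
    then have "map_vec \<sigma> (map_vec \<sigma> x) = map_vec \<sigma> (map_vec \<sigma> y)" by simp
    then show "x = y" by simp
  qed
  then show ?thesis
    using card_linear_code[OF C] card_linear_code[OF linear_code_map_vec[OF C]]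
    by (simp add: card_image)
qed

lemma linear_code_sesq_dual: "C \<subseteq> carrier_vec n \<Longrightarrow> linear_code n (sesq_dual \<sigma> n C)"
  unfolding sesq_dual_eq_dual_E_map_vec by (rule linear_code_dual_E) auto

lemma code_dim_sesq_dual:
  assumes "linear_code n C"
  shows "code_dim n (sesq_dual \<sigma> n C) + code_dim n C = n"
  using code_dim_dual_E[OF linear_code_map_vec[OF assms]]
  unfolding sesq_dual_eq_dual_E_map_vec code_dim_map_vec[OF assms] .

lemma sesq_dual_sesq_dual:
  assumes C: "linear_code n C"
  shows "sesq_dual \<sigma> n (sesq_dual \<sigma> n C) = C"
proof -
  have C_carrier: "C \<subseteq> carrier_vec n" using linear_code_carrier[OF C] .
  have dual: "linear_code n (sesq_dual \<sigma> n C)" using linear_code_sesq_dual[OF C_carrier] .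
  have dual_dual: "linear_code n (sesq_dual \<sigma> n (sesq_dual \<sigma> n C))"
    using linear_code_sesq_dual[OF linear_code_carrier[OF dual]] .
  have "C \<subseteq> sesq_dual \<sigma> n (sesq_dual \<sigma> n C)"
    using C_carrier sesq_form_swap unfolding sesq_dual_def by fastforce
  moreover have "code_dim n (sesq_dual \<sigma> n (sesq_dual \<sigma> n C)) = code_dim n C"
    using code_dim_sesq_dual[OF C] code_dim_sesq_dual[OF dual] by simp
  ultimately show ?thesis
    using card_subset_eq[OF finite_linear_code[OF dual_dual]]
      card_linear_code[OF C] card_linear_code[OF dual_dual] by metis
qed

lemma sesq_dual_set_plus:
  assumes X: "linear_code n X" and Y: "linear_code n Y"
  shows "sesq_dual \<sigma> n (X + Y) = sesq_dual \<sigma> n X \<inter> sesq_dual \<sigma> n Y"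
proof
  have "X \<subseteq> X + Y" "Y \<subseteq> X + Y" using subset_set_plus_linear_code[OF X Y] .
  then show "sesq_dual \<sigma> n (X + Y) \<subseteq> sesq_dual \<sigma> n X \<inter> sesq_dual \<sigma> n Y"
    using sesq_dual_antimono by blast
  show "sesq_dual \<sigma> n X \<inter> sesq_dual \<sigma> n Y \<subseteq> sesq_dual \<sigma> n (X + Y)"
    using sesq_form_add_right linear_code_carrier[OF X] linear_code_carrier[OF Y]
    unfolding sesq_dual_def by (fastforce elim!: set_plus_elim)
qed

lemma code_dim_Int_sesq_dual:
  assumes A: "linear_code n A" and B: "linear_code n B"
  shows "code_dim n (B \<inter> sesq_dual \<sigma> n A) + code_dim n A
    = code_dim n B + code_dim n (A \<inter> sesq_dual \<sigma> n B)"
proof -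
  let ?B' = "sesq_dual \<sigma> n B"
  have B': "linear_code n ?B'" using linear_code_sesq_dual[OF linear_code_carrier[OF B]] .
  have AB': "linear_code n (A + ?B')" using linear_code_set_plus[OF A B'] .
  have "B \<inter> sesq_dual \<sigma> n A = sesq_dual \<sigma> n (A + ?B')"
    using sesq_dual_set_plus[OF A B'] sesq_dual_sesq_dual[OF B] by auto
  then have "code_dim n (B \<inter> sesq_dual \<sigma> n A) + code_dim n (A + ?B') = n"
    using code_dim_sesq_dual[OF AB'] by simp
  moreover have "code_dim n (A + ?B') + code_dim n (A \<inter> ?B') = code_dim n A + code_dim n ?B'"
    using code_dim_set_plus_Int[OF A B'] .
  moreover have "code_dim n ?B' + code_dim n B = n"
    using code_dim_sesq_dual[OF B] .
  ultimately show ?thesis by linarith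
qed

end

lemma finite_field_involution_id: "finite_field_involution (\<lambda>x. x)"
  by unfold_locales simp_all

lemma finite_field_involution_frobenius:
  assumes p: "prime p" and "even h" and card: "card (UNIV :: 'a::{finite,field} set) = p ^ h"
  shows "finite_field_involution (\<lambda>x :: 'a. x ^ p ^ (h div 2))"
proof
  have "CHAR('a) = p" using CHAR_eq_prime_if_card[OF p card] .
  then show "(x + y) ^ p ^ (h div 2) = x ^ p ^ (h div 2) + y ^ p ^ (h div 2)" for x y :: 'a
    using p by (intro freshmans_dream') auto
  show "(x * y) ^ p ^ (h div 2) = x ^ p ^ (h div 2) * y ^ p ^ (h div 2)" for x y :: 'a
    by (rule power_mult_distrib)
  have "p ^ (h div 2) * p ^ (h div 2) = p ^ h"
    using \<open>even h\<close> by (metis dvd_mult_div_cancel mult_2 power_add)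
  then show "(x ^ p ^ (h div 2)) ^ p ^ (h div 2) = x" for x :: 'a
    using power_card_UNIV_eq_self[of x] card by (simp add: power_mult[symmetric])
qed

lemma uuv_carrier:
  assumes "A \<subseteq> carrier_vec n" "B \<subseteq> carrier_vec n"
  shows "uuv A B \<subseteq> carrier_vec (2 * n)"
proof
  fix x assume "x \<in> uuv A B"
  then obtain u v where "x = u @\<^sub>v (u + v)" "u \<in> A" "v \<in> B" unfolding uuv_def by blast
  moreover from this have "u \<in> carrier_vec n" "v \<in> carrier_vec n" using assms by auto
  ultimately show "x \<in> carrier_vec (2 * n)" unfolding mult_2 by simp
qed

lemma inj_on_append_add_vec:
  fixes A B :: "'a::cancel_semigroup_add vec set"
  assumes "A \<subseteq> carrier_vec n" "B \<subseteq> carrier_vec n"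
  shows "inj_on (\<lambda>(v, u). u @\<^sub>v (u + v)) (B \<times> A)"
proof (rule inj_onI)
  fix p q assume pq_mem: "p \<in> B \<times> A" "q \<in> B \<times> A"
    and eq: "(\<lambda>(v, u). u @\<^sub>v (u + v)) p = (\<lambda>(v, u). u @\<^sub>v (u + v)) q"
  obtain u v u' v' where pq: "p = (v, u)" "q = (v', u')" by (cases p, cases q)
  have carrier: "u \<in> carrier_vec n" "v \<in> carrier_vec n" "u' \<in> carrier_vec n" "v' \<in> carrier_vec n"
    using pq_mem assms unfolding pq by auto
  then have "u = u'" "u + v = u + v'" using eq append_vec_eq[of u n u'] unfolding pq by auto
  then show "p = q" using pq add_left_cancel_vec carrier by blast
qed

lemma linear_code_uuv:
  assumes A: "linear_code n A" and B: "linear_code n B"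
  shows "linear_code (2 * n) (uuv A B)"
  unfolding linear_code_iff
proof (intro conjI ballI allI)
  note dims = linear_code_dim_vec[OF A] linear_code_dim_vec[OF B]
  show "uuv A B \<subseteq> carrier_vec (2 * n)"
    using uuv_carrier[OF linear_code_carrier[OF A] linear_code_carrier[OF B]] .
  have "0\<^sub>v (2 * n) = 0\<^sub>v n @\<^sub>v (0\<^sub>v n + 0\<^sub>v n :: 'a vec)" by (intro eq_vecI) auto
  then show "0\<^sub>v (2 * n) \<in> uuv A B"
    unfolding uuv_def using linear_code_zero[OF A] linear_code_zero[OF B] by blast
next
  note dims = linear_code_dim_vec[OF A] linear_code_dim_vec[OF B]
  fix a b assume "a \<in> uuv A B" "b \<in> uuv A B"
  then obtain u v u' v' where uv: "a = u @\<^sub>v (u + v)" "b = u' @\<^sub>v (u' + v')"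
    "u \<in> A" "v \<in> B" "u' \<in> A" "v' \<in> B"
    unfolding uuv_def by blast
  have carrier: "u \<in> carrier_vec n" "v \<in> carrier_vec n" "u' \<in> carrier_vec n" "v' \<in> carrier_vec n"
    using uv(3-6) linear_code_carrier[OF A] linear_code_carrier[OF B] by auto
  have "a + b = (u + u') @\<^sub>v ((u + v) + (u' + v'))"
    unfolding uv(1,2) by (rule append_vec_add[of _ n _ _ n]) (use carrier in auto)
  also have "(u + v) + (u' + v') = (u + u') + (v + v')"
    using uv by (auto intro!: eq_vecI simp: dims)
  finally show "a + b \<in> uuv A B"
    unfolding uuv_def using uv linear_code_add[OF A] linear_code_add[OF B] by blast
next
  note dims = linear_code_dim_vec[OF A] linear_code_dim_vec[OF B]
  fix c a assume "a \<in> uuv A B"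
  then obtain u v where uv: "a = u @\<^sub>v (u + v)" "u \<in> A" "v \<in> B"
    unfolding uuv_def by blast
  then have "c \<cdot>\<^sub>v a = (c \<cdot>\<^sub>v u) @\<^sub>v (c \<cdot>\<^sub>v u + c \<cdot>\<^sub>v v)"
    by (auto intro!: eq_vecI simp: dims distrib_left)
  then show "c \<cdot>\<^sub>v a \<in> uuv A B"
    unfolding uuv_def using uv linear_code_smult[OF A] linear_code_smult[OF B] by blast
qed

lemma card_uuv:
  assumes A: "linear_code n A" and B: "linear_code n B"
  shows "card (uuv A B) = card A * card B"
proof -
  have "uuv A B = (\<lambda>(v, u). u @\<^sub>v (u + v)) ` (B \<times> A)"
    unfolding uuv_def by auto
  moreover have "inj_on (\<lambda>(v, u). u @\<^sub>v (u + v)) (B \<times> A)"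
    using inj_on_append_add_vec linear_code_carrier[OF A] linear_code_carrier[OF B] .
  ultimately show ?thesis by (simp add: card_image card_cartesian_product)
qed

lemma code_dim_uuv:
  fixes A B :: "'a::{finite,field} vec set"
  assumes A: "linear_code n A" and B: "linear_code n B"
  shows "code_dim (2 * n) (uuv A B) = code_dim n A + code_dim n B"
  using card_uuv[OF A B]
  unfolding card_linear_code[OF linear_code_uuv[OF A B]] card_linear_code[OF A] card_linear_code[OF B]
  by (simp add: power_add[symmetric])

lemma hamming_dist_append:
  assumes "a \<in> carrier_vec n" "a' \<in> carrier_vec n" "b \<in> carrier_vec m" "b' \<in> carrier_vec m"
  shows "hamming_dist (a @\<^sub>v b) (a' @\<^sub>v b') = hamming_dist a a' + hamming_dist b b'"
proof -
  let ?D1 = "{i. i < n \<and> a $ i \<noteq> a' $ i}" and ?D2 = "{i. i < m \<and> b $ i \<noteq> b' $ i}"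
  have "{i. i < dim_vec (a @\<^sub>v b) \<and> (a @\<^sub>v b) $ i \<noteq> (a' @\<^sub>v b') $ i} = ?D1 \<union> (\<lambda>i. n + i) ` ?D2"
  proof (intro Set.set_eqI iffI)
    fix i assume i: "i \<in> {i. i < dim_vec (a @\<^sub>v b) \<and> (a @\<^sub>v b) $ i \<noteq> (a' @\<^sub>v b') $ i}"
    show "i \<in> ?D1 \<union> (\<lambda>i. n + i) ` ?D2"
    proof (cases "i < n")
      case False
      then have "i = n + (i - n)" "i - n \<in> ?D2" using i assms by auto
      then show ?thesis by blast
    qed (use i assms in auto)
  qed (use assms in auto)
  moreover have "card (?D1 \<union> (\<lambda>i. n + i) ` ?D2) = card ?D1 + card ?D2"
    by (subst card_Un_disjoint) (auto simp: card_image)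
  ultimately show ?thesis
    using assms unfolding hamming_dist_def by simp
qed

lemma hamming_dist_add_right:
  fixes u u' v :: "'a::{zero,cancel_semigroup_add} vec"
  assumes "u \<in> carrier_vec n" "u' \<in> carrier_vec n" "v \<in> carrier_vec n"
  shows "hamming_dist (u + v) (u' + v) = hamming_dist u u'"
  unfolding hamming_dist_def using assms by (intro arg_cong[where f = card]) auto

lemma hamming_dist_le_add:
  fixes u u' v v' :: "'a::{zero,cancel_semigroup_add} vec"
  assumes "u \<in> carrier_vec n" "u' \<in> carrier_vec n" "v \<in> carrier_vec n" "v' \<in> carrier_vec n"
  shows "hamming_dist v v' \<le> hamming_dist u u' + hamming_dist (u + v) (u' + v')"
proof -
  let ?D = "\<lambda>x y :: 'a vec. {i. i < dim_vec x \<and> x $ i \<noteq> y $ i}"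
  have "?D v v' \<subseteq> ?D u u' \<union> ?D (u + v) (u' + v')"
    using assms by auto
  then have "card (?D v v') \<le> card (?D u u' \<union> ?D (u + v) (u' + v'))"
    by (rule card_mono[rotated]) auto
  also have "\<dots> \<le> card (?D u u') + card (?D (u + v) (u' + v'))"
    by (rule card_Un_le)
  finally show ?thesis unfolding hamming_dist_def .
qed

lemma min_distance_uuv:
  assumes A: "linear_code n A" and B: "linear_code n B"
    and dA: "min_distance A d\<^sub>1" and dB: "min_distance B d\<^sub>2"
  shows "min_distance (uuv A B) (min (2 * d\<^sub>1) d\<^sub>2)"
  unfolding min_distance_def
proof
  have carrier: "x \<in> carrier_vec n" if "x \<in> A \<union> B" for x
    using that linear_code_carrier[OF A] linear_code_carrier[OF B] by auto
  have zero: "0\<^sub>v n \<in> A" "0\<^sub>v n \<in> B" using linear_code_zero[OF A] linear_code_zero[OF B] .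
  show "\<exists>x\<in>uuv A B. \<exists>y\<in>uuv A B. x \<noteq> y \<and> hamming_dist x y = min (2 * d\<^sub>1) d\<^sub>2"
  proof (cases "2 * d\<^sub>1 \<le> d\<^sub>2")
    case True
    obtain x y where xy: "x \<in> A" "y \<in> A" "x \<noteq> y" "hamming_dist x y = d\<^sub>1"
      using dA unfolding min_distance_def by blast
    then have "x @\<^sub>v (x + 0\<^sub>v n) \<in> uuv A B" "y @\<^sub>v (y + 0\<^sub>v n) \<in> uuv A B"
      unfolding uuv_def using zero by blast+
    moreover have "x @\<^sub>v (x + 0\<^sub>v n) \<noteq> y @\<^sub>v (y + 0\<^sub>v n)"
      using xy carrier append_vec_eq[of x n y] by auto
    moreover have "hamming_dist (x @\<^sub>v (x + 0\<^sub>v n)) (y @\<^sub>v (y + 0\<^sub>v n)) = 2 * d\<^sub>1"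
      using xy carrier hamming_dist_append[of x n y "x + 0\<^sub>v n" n "y + 0\<^sub>v n"] by simp
    ultimately show ?thesis using True by (metis min.absorb1)
  next
    case False
    obtain x y where xy: "x \<in> B" "y \<in> B" "x \<noteq> y" "hamming_dist x y = d\<^sub>2"
      using dB unfolding min_distance_def by blast
    then have "0\<^sub>v n @\<^sub>v (0\<^sub>v n + x) \<in> uuv A B" "0\<^sub>v n @\<^sub>v (0\<^sub>v n + y) \<in> uuv A B"
      unfolding uuv_def using zero by blast+
    moreover have "0\<^sub>v n @\<^sub>v (0\<^sub>v n + x) \<noteq> 0\<^sub>v n @\<^sub>v (0\<^sub>v n + y)"
      using xy carrier append_vec_eq[of "0\<^sub>v n" n "0\<^sub>v n"] by auto
    moreover have "hamming_dist (0\<^sub>v n @\<^sub>v (0\<^sub>v n + x)) (0\<^sub>v n @\<^sub>v (0\<^sub>v n + y)) = d\<^sub>2"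
      using xy carrier hamming_dist_append[of "0\<^sub>v n" n "0\<^sub>v n" "0\<^sub>v n + x" n "0\<^sub>v n + y"]
      by (simp add: hamming_dist_def)
    ultimately show ?thesis using False by (metis min.absorb2 nat_le_linear)
  qed
next
  have carrier: "x \<in> carrier_vec n" if "x \<in> A \<union> B" for x
    using that linear_code_carrier[OF A] linear_code_carrier[OF B] by auto
  show "\<forall>x\<in>uuv A B. \<forall>y\<in>uuv A B. x \<noteq> y \<longrightarrow> min (2 * d\<^sub>1) d\<^sub>2 \<le> hamming_dist x y"
  proof (intro ballI impI)
    fix x y assume "x \<in> uuv A B" "y \<in> uuv A B" "x \<noteq> y"
    then obtain u v u' v' where uv: "x = u @\<^sub>v (u + v)" "y = u' @\<^sub>v (u' + v')"
      "u \<in> A" "v \<in> B" "u' \<in> A" "v' \<in> B"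
      unfolding uuv_def by blast
    have dist: "hamming_dist x y = hamming_dist u u' + hamming_dist (u + v) (u' + v')"
      unfolding uv using uv carrier hamming_dist_append[of u n u' "u + v" n "u' + v'"] by simp
    show "min (2 * d\<^sub>1) d\<^sub>2 \<le> hamming_dist x y"
    proof (cases "v = v'")
      case True
      then have "u \<noteq> u'" using \<open>x \<noteq> y\<close> uv by auto
      then have "d\<^sub>1 \<le> hamming_dist u u'" using dA uv unfolding min_distance_def by blast
      then show ?thesis
        using dist True hamming_dist_add_right[of u n u' v'] uv carrier by simp
    next
      case False
      then have "d\<^sub>2 \<le> hamming_dist v v'" using dB uv unfolding min_distance_def by blast
      then show ?thesis
        using dist hamming_dist_le_add[of u n u' v v'] uv carrier by simp
    qed
  qed
qed

lemma is_gen_matrixI: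
  fixes G :: "'a::{finite,field} mat"
  assumes G: "G \<in> carrier_mat k n" and C: "linear_code n C" and dim: "code_dim n C = k"
    and span: "LinearCombinations.module.span class_ring (module_vec TYPE('a) n) (set (rows G)) = C"
  shows "is_gen_matrix n k G C"
proof -
  interpret vec_space "TYPE('a)" n .
  have sub: "VectorSpace.subspace class_ring C V" using C unfolding linear_code_def .
  interpret C: vectorspace class_ring "vs C" using subspace_is_vs[OF sub] .
  have "set (rows G) \<subseteq> carrier_vec n" using rows_carrier[of G] G by auto
  then have rows: "set (rows G) \<subseteq> C"
    using in_own_span[of "set (rows G)"] span by auto
  have "submodule class_ring C V" using sub by simp
  note same = span_li_not_depend[OF rows this]
  have gen: "C.gen_set (set (rows G))" using same(1) span by simp
  have "k \<le> card (set (rows G))"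
    using C.gen_ge_dim[OF _ _ gen] rows dim unfolding code_dim_def by simp
  then have distinct: "distinct (rows G)"
    using card_length[of "rows G"] G by (simp add: card_distinct)
  have "C.basis (set (rows G))"
    using C.dim_gen_is_basis[OF _ _ gen] rows dim distinct_card[OF distinct] G
    unfolding code_dim_def by simp
  then have "\<not> lin_dep (set (rows G))"
    using same(2) unfolding C.basis_def by simp
  then show ?thesis
    unfolding is_gen_matrix_def using G distinct span by simp
qed

lemma code_dim_if_is_gen_matrix:
  fixes C :: "'a::{finite,field} vec set"
  assumes C: "linear_code n C" and G: "is_gen_matrix n k G C"
  shows "code_dim n C = k"
proof -
  interpret vec_space "TYPE('a)" n .
  have sub: "VectorSpace.subspace class_ring C V" using C unfolding linear_code_def .
  interpret C: vectorspace class_ring "vs C" using subspace_is_vs[OF sub] .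
  have G_carrier: "G \<in> carrier_mat k n" and distinct: "distinct (rows G)"
    and indpt: "\<not> lin_dep (set (rows G))" and span: "span (set (rows G)) = C"
    using G unfolding is_gen_matrix_def by auto
  have "set (rows G) \<subseteq> carrier_vec n" using rows_carrier[of G] G_carrier by auto
  then have rows: "set (rows G) \<subseteq> C"
    using in_own_span[of "set (rows G)"] span by auto
  have "submodule class_ring C V" using sub by simp
  note same = span_li_not_depend[OF rows this]
  have "C.basis (set (rows G))"
    unfolding C.basis_def using rows same indpt span by simp
  then show ?thesis
    using C.dim_basis[of "set (rows G)"] distinct_card[OF distinct] G_carrier
    unfolding code_dim_def by simp
qed

lemma span_rows_eq_image:
  fixes G :: "'a::field mat"
  assumes G: "G \<in> carrier_mat k n"
  shows "LinearCombinations.module.span class_ring (module_vec TYPE('a) n) (set (rows G))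
    = (\<lambda>y. G\<^sup>T *\<^sub>v y) ` carrier_vec k"
proof -
  interpret vec_space "TYPE('a)" n .
  show ?thesis
    using row_space_eq[OF G] G unfolding row_space_def by auto
qed

lemma is_gen_matrix_uuv:
  fixes A B :: "'a::{finite,field} vec set"
  assumes A: "linear_code n A" and B: "linear_code n B"
    and G\<^sub>1: "is_gen_matrix n k\<^sub>1 G\<^sub>1 A" and G\<^sub>2: "is_gen_matrix n k\<^sub>2 G\<^sub>2 B"
  shows "is_gen_matrix (2 * n) (k\<^sub>1 + k\<^sub>2) (four_block_mat G\<^sub>1 G\<^sub>1 (0\<^sub>m k\<^sub>2 n) G\<^sub>2) (uuv A B)"
proof -
  define M where "M = four_block_mat G\<^sub>1 G\<^sub>1 (0\<^sub>m k\<^sub>2 n) G\<^sub>2"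
  have G\<^sub>1_carrier: "G\<^sub>1 \<in> carrier_mat k\<^sub>1 n" and G\<^sub>2_carrier: "G\<^sub>2 \<in> carrier_mat k\<^sub>2 n"
    using G\<^sub>1 G\<^sub>2 unfolding is_gen_matrix_def by auto
  have M: "M \<in> carrier_mat (k\<^sub>1 + k\<^sub>2) (2 * n)"
    unfolding M_def mult_2 using G\<^sub>1_carrier G\<^sub>2_carrier by auto
  have A_image: "A = (\<lambda>y. G\<^sub>1\<^sup>T *\<^sub>v y) ` carrier_vec k\<^sub>1"
    using G\<^sub>1 span_rows_eq_image[OF G\<^sub>1_carrier] unfolding is_gen_matrix_def by simp
  have B_image: "B = (\<lambda>y. G\<^sub>2\<^sup>T *\<^sub>v y) ` carrier_vec k\<^sub>2"
    using G\<^sub>2 span_rows_eq_image[OF G\<^sub>2_carrier] unfolding is_gen_matrix_def by simp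
  have M_mult: "M\<^sup>T *\<^sub>v (y\<^sub>1 @\<^sub>v y\<^sub>2) = (G\<^sub>1\<^sup>T *\<^sub>v y\<^sub>1) @\<^sub>v (G\<^sub>1\<^sup>T *\<^sub>v y\<^sub>1 + G\<^sub>2\<^sup>T *\<^sub>v y\<^sub>2)"
    if "y\<^sub>1 \<in> carrier_vec k\<^sub>1" "y\<^sub>2 \<in> carrier_vec k\<^sub>2" for y\<^sub>1 y\<^sub>2
  proof -
    have M_transpose: "M\<^sup>T = four_block_mat G\<^sub>1\<^sup>T (0\<^sub>m n k\<^sub>2) G\<^sub>1\<^sup>T G\<^sub>2\<^sup>T"
      unfolding M_def using transpose_four_block_mat[OF G\<^sub>1_carrier G\<^sub>1_carrier _ G\<^sub>2_carrier] by simp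
    have "M\<^sup>T *\<^sub>v (y\<^sub>1 @\<^sub>v y\<^sub>2)
        = (G\<^sub>1\<^sup>T *\<^sub>v y\<^sub>1 + 0\<^sub>m n k\<^sub>2 *\<^sub>v y\<^sub>2) @\<^sub>v (G\<^sub>1\<^sup>T *\<^sub>v y\<^sub>1 + G\<^sub>2\<^sup>T *\<^sub>v y\<^sub>2)"
      unfolding M_transpose
      by (rule four_block_mat_mult_vec) (use G\<^sub>1_carrier G\<^sub>2_carrier that in auto)
    moreover have "G\<^sub>1\<^sup>T *\<^sub>v y\<^sub>1 + 0\<^sub>m n k\<^sub>2 *\<^sub>v y\<^sub>2 = G\<^sub>1\<^sup>T *\<^sub>v y\<^sub>1"
      using G\<^sub>1_carrier that by (intro eq_vecI) auto
    ultimately show ?thesis by simp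
  qed
  have "(\<lambda>y. M\<^sup>T *\<^sub>v y) ` carrier_vec (k\<^sub>1 + k\<^sub>2) = uuv A B"
  proof (intro Set.set_eqI iffI)
    fix w assume "w \<in> (\<lambda>y. M\<^sup>T *\<^sub>v y) ` carrier_vec (k\<^sub>1 + k\<^sub>2)"
    then obtain y where y: "y \<in> carrier_vec (k\<^sub>1 + k\<^sub>2)" "w = M\<^sup>T *\<^sub>v y" by blast
    let ?y\<^sub>1 = "vec_first y k\<^sub>1" and ?y\<^sub>2 = "vec_last y k\<^sub>2"
    have "w = M\<^sup>T *\<^sub>v (?y\<^sub>1 @\<^sub>v ?y\<^sub>2)" using y by simp
    then have "w = (G\<^sub>1\<^sup>T *\<^sub>v ?y\<^sub>1) @\<^sub>v (G\<^sub>1\<^sup>T *\<^sub>v ?y\<^sub>1 + G\<^sub>2\<^sup>T *\<^sub>v ?y\<^sub>2)"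
      using M_mult[OF vec_first_carrier vec_last_carrier] by simp
    moreover have "G\<^sub>1\<^sup>T *\<^sub>v ?y\<^sub>1 \<in> A" "G\<^sub>2\<^sup>T *\<^sub>v ?y\<^sub>2 \<in> B"
      unfolding A_image B_image by (intro imageI vec_first_carrier vec_last_carrier)+
    ultimately show "w \<in> uuv A B"
      unfolding uuv_def by blast
  next
    fix w assume "w \<in> uuv A B"
    then obtain u v where uv: "w = u @\<^sub>v (u + v)" "u \<in> A" "v \<in> B"
      unfolding uuv_def by blast
    obtain y\<^sub>1 where "y\<^sub>1 \<in> carrier_vec k\<^sub>1" "u = G\<^sub>1\<^sup>T *\<^sub>v y\<^sub>1" using uv(2) A_image by blast
    moreover obtain y\<^sub>2 where "y\<^sub>2 \<in> carrier_vec k\<^sub>2" "v = G\<^sub>2\<^sup>T *\<^sub>v y\<^sub>2" using uv(3) B_image by blast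
    ultimately show "w \<in> (\<lambda>y. M\<^sup>T *\<^sub>v y) ` carrier_vec (k\<^sub>1 + k\<^sub>2)"
      using uv(1) M_mult by (intro image_eqI[where x = "y\<^sub>1 @\<^sub>v y\<^sub>2"]) auto
  qed
  then have "LinearCombinations.module.span class_ring (module_vec TYPE('a) (2 * n)) (set (rows M)) = uuv A B"
    using span_rows_eq_image[OF M] by simp
  moreover have "code_dim (2 * n) (uuv A B) = k\<^sub>1 + k\<^sub>2"
    using code_dim_uuv[OF A B] code_dim_if_is_gen_matrix[OF A G\<^sub>1] code_dim_if_is_gen_matrix[OF B G\<^sub>2]
    by simp
  ultimately show ?thesis
    unfolding M_def[symmetric] using is_gen_matrixI[OF M linear_code_uuv[OF A B]] by simp
qed

context finite_field_involution
begin

lemma sesq_form_append: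
  assumes "u \<in> carrier_vec n" "w \<in> carrier_vec m" "u' \<in> carrier_vec n" "w' \<in> carrier_vec m"
  shows "sesq_form \<sigma> (u @\<^sub>v w) (u' @\<^sub>v w') = sesq_form \<sigma> u u' + sesq_form \<sigma> w w'"
proof -
  have "map_vec \<sigma> (u' @\<^sub>v w') = map_vec \<sigma> u' @\<^sub>v map_vec \<sigma> w'"
    using assms by (intro eq_vecI) auto
  then show ?thesis
    using assms unfolding sesq_form_def by (simp add: scalar_prod_append[of _ n _ m])
qed

lemma sesq_form_uuv:
  assumes "u \<in> carrier_vec n" "v \<in> carrier_vec n" "u' \<in> carrier_vec n" "v' \<in> carrier_vec n"
  shows "sesq_form \<sigma> (u @\<^sub>v (u + v)) (u' @\<^sub>v (u' + v'))
    = (sesq_form \<sigma> u u' + sesq_form \<sigma> u u') + sesq_form \<sigma> v u' + sesq_form \<sigma> (u + v) v'"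
proof -
  have "sesq_form \<sigma> (u @\<^sub>v (u + v)) (u' @\<^sub>v (u' + v')) = sesq_form \<sigma> u u' + sesq_form \<sigma> (u + v) (u' + v')"
    using assms by (intro sesq_form_append[where m = n]) auto
  also have "sesq_form \<sigma> (u + v) (u' + v') = sesq_form \<sigma> u u' + sesq_form \<sigma> v u' + sesq_form \<sigma> (u + v) v'"
    using assms by (simp add: sesq_form_add_right[of _ n] sesq_form_add_left[of _ n])
  finally show ?thesis by (simp add: algebra_simps)
qed

lemma uuv_mem_sesq_dual_iff:
  assumes A: "linear_code n A" and B: "linear_code n B"
    and double: "\<And>u u'. u \<in> A \<Longrightarrow> u' \<in> A \<Longrightarrow> sesq_form \<sigma> u u' + sesq_form \<sigma> u u' = 0"
    and u: "u \<in> A" and v: "v \<in> B"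
  shows "u @\<^sub>v (u + v) \<in> sesq_dual \<sigma> (2 * n) (uuv A B)
    \<longleftrightarrow> v \<in> sesq_dual \<sigma> n A \<and> u + v \<in> sesq_dual \<sigma> n B"
proof -
  have carrier: "x \<in> carrier_vec n" if "x \<in> A \<union> B" for x
    using that linear_code_carrier[OF A] linear_code_carrier[OF B] by auto
  have form: "sesq_form \<sigma> (u @\<^sub>v (u + v)) (u' @\<^sub>v (u' + v'))
      = sesq_form \<sigma> v u' + sesq_form \<sigma> (u + v) v'" if "u' \<in> A" "v' \<in> B" for u' v'
    using sesq_form_uuv[of u n v u' v'] double[OF u that(1)] carrier u v that by simp
  have "u @\<^sub>v (u + v) \<in> carrier_vec (2 * n)" "u + v \<in> carrier_vec n"
    using carrier u v unfolding mult_2 by auto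
  then have "u @\<^sub>v (u + v) \<in> sesq_dual \<sigma> (2 * n) (uuv A B)
      \<longleftrightarrow> (\<forall>u'\<in>A. \<forall>v'\<in>B. sesq_form \<sigma> (u @\<^sub>v (u + v)) (u' @\<^sub>v (u' + v')) = 0)"
    unfolding sesq_dual_def uuv_def by blast
  also have "\<dots> \<longleftrightarrow> (\<forall>u'\<in>A. \<forall>v'\<in>B. sesq_form \<sigma> v u' + sesq_form \<sigma> (u + v) v' = 0)"
    using form by simp
  also have "\<dots> \<longleftrightarrow> (\<forall>u'\<in>A. sesq_form \<sigma> v u' = 0) \<and> (\<forall>v'\<in>B. sesq_form \<sigma> (u + v) v' = 0)"
  proof -
    have "sesq_form \<sigma> x (0\<^sub>v n) = 0" if "x \<in> carrier_vec n" for x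
      using that unfolding sesq_form_def by simp
    then have "sesq_form \<sigma> v (0\<^sub>v n) = 0" "sesq_form \<sigma> (u + v) (0\<^sub>v n) = 0"
      using carrier u v by auto
    then show ?thesis
      using linear_code_zero[OF A] linear_code_zero[OF B] by force
  qed
  finally show ?thesis
    unfolding sesq_dual_def using carrier u v by auto
qed

lemma hull_uuv_eq_image:
  assumes A: "linear_code n A" and B: "linear_code n B"
    and double: "\<And>u u'. u \<in> A \<Longrightarrow> u' \<in> A \<Longrightarrow> sesq_form \<sigma> u u' + sesq_form \<sigma> u u' = 0"
  shows "uuv A B \<inter> sesq_dual \<sigma> (2 * n) (uuv A B)
    = (\<lambda>(v, u). u @\<^sub>v (u + v)) ` (SIGMA v:B \<inter> sesq_dual \<sigma> n A. {u \<in> A. u + v \<in> sesq_dual \<sigma> n B})"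
    (is "?hull = ?f ` ?P")
proof (intro Set.set_eqI iffI)
  fix x assume "x \<in> ?hull"
  then obtain u v where "x = u @\<^sub>v (u + v)" "u \<in> A" "v \<in> B"
    "u @\<^sub>v (u + v) \<in> sesq_dual \<sigma> (2 * n) (uuv A B)"
    unfolding uuv_def by blast
  then show "x \<in> ?f ` ?P"
    using uuv_mem_sesq_dual_iff[OF A B double] by (auto intro!: image_eqI[where x = "(v, u)"])
next
  fix x assume "x \<in> ?f ` ?P"
  then obtain u v where "x = u @\<^sub>v (u + v)" "u \<in> A" "v \<in> B"
    "v \<in> sesq_dual \<sigma> n A" "u + v \<in> sesq_dual \<sigma> n B"
    by auto
  then show "x \<in> ?hull"
    using uuv_mem_sesq_dual_iff[OF A B double] unfolding uuv_def by blast
qed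

lemma code_dim_hull_uuv:
  assumes A: "linear_code n A" and B: "linear_code n B"
    and double: "\<And>u u'. u \<in> A \<Longrightarrow> u' \<in> A \<Longrightarrow> sesq_form \<sigma> u u' + sesq_form \<sigma> u u' = 0"
  shows "code_dim (2 * n) (uuv A B \<inter> sesq_dual \<sigma> (2 * n) (uuv A B))
    = code_dim n (A \<inter> sesq_dual \<sigma> n B) + code_dim n (B \<inter> sesq_dual \<sigma> n A \<inter> (A + sesq_dual \<sigma> n B))"
proof -
  let ?A' = "sesq_dual \<sigma> n A" and ?B' = "sesq_dual \<sigma> n B"
  have A': "linear_code n ?A'" and B': "linear_code n ?B'"
    using linear_code_sesq_dual linear_code_carrier[OF A] linear_code_carrier[OF B] by auto
  have W: "linear_code n (B \<inter> ?A')" using linear_code_Int[OF B A'] .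
  have U: "linear_code (2 * n) (uuv A B)" using linear_code_uuv[OF A B] .
  have hull: "linear_code (2 * n) (uuv A B \<inter> sesq_dual \<sigma> (2 * n) (uuv A B))"
    using linear_code_Int[OF U linear_code_sesq_dual[OF linear_code_carrier[OF U]]] .
  have "inj_on (\<lambda>(v, u). u @\<^sub>v (u + v)) (SIGMA v:B \<inter> ?A'. {u \<in> A. u + v \<in> ?B'})"
    using inj_on_append_add_vec[OF linear_code_carrier[OF A] linear_code_carrier[OF B]]
    by (rule inj_on_subset) auto
  moreover have "uuv A B \<inter> sesq_dual \<sigma> (2 * n) (uuv A B)
      = (\<lambda>(v, u). u @\<^sub>v (u + v)) ` (SIGMA v:B \<inter> ?A'. {u \<in> A. u + v \<in> ?B'})"
    using hull_uuv_eq_image[OF A B double] .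
  ultimately have "card (uuv A B \<inter> sesq_dual \<sigma> (2 * n) (uuv A B))
      = card (SIGMA v:B \<inter> ?A'. {u \<in> A. u + v \<in> ?B'})"
    by (simp add: card_image)
  also have "\<dots> = card (B \<inter> ?A' \<inter> (A + ?B')) * card (A \<inter> ?B')"
    using card_Sigma_coset[OF A B' finite_linear_code[OF W] linear_code_carrier[OF W]] .
  finally show ?thesis
    unfolding card_linear_code[OF hull] card_linear_code[OF linear_code_Int[OF A B']]
      card_linear_code[OF linear_code_Int[OF W linear_code_set_plus[OF A B']]]
    by (simp add: power_add[symmetric])
qed

lemma sesq_form_double_eq_zero:
  assumes "(\<exists>m. card (UNIV :: 'a set) = 2 ^ m) \<or> C \<subseteq> sesq_dual \<sigma> n C" "u \<in> C" "u' \<in> C"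
  shows "sesq_form \<sigma> u u' + sesq_form \<sigma> u u' = 0"
  using assms(1)
proof
  assume "\<exists>m. card (UNIV :: 'a set) = 2 ^ m"
  then show ?thesis using double_eq_zero_if_card_power_two by blast
next
  assume "C \<subseteq> sesq_dual \<sigma> n C"
  then show ?thesis using assms(2,3) unfolding sesq_dual_def by auto
qed

lemma code_dim_hull_uuv_bounds:
  assumes A: "linear_code n A" and B: "linear_code n B"
    and cond: "(\<exists>m. card (UNIV :: 'a set) = 2 ^ m) \<or> A \<subseteq> sesq_dual \<sigma> n A"
  defines "h \<equiv> code_dim (2 * n) (uuv A B \<inter> sesq_dual \<sigma> (2 * n) (uuv A B))"
    and "t \<equiv> code_dim n (A \<inter> sesq_dual \<sigma> n B)"
  shows "2 * int t + int (code_dim n (B \<inter> sesq_dual \<sigma> n B)) - int (code_dim n A) \<le> int h"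
    and "int h \<le> 2 * int t + int (code_dim n B) - int (code_dim n A)"
    and "B \<subseteq> sesq_dual \<sigma> n B \<Longrightarrow> int h = 2 * int t + int (code_dim n B) - int (code_dim n A)"
proof -
  let ?A' = "sesq_dual \<sigma> n A" and ?B' = "sesq_dual \<sigma> n B"
  let ?W = "B \<inter> ?A'" and ?L = "B \<inter> ?B'"
  let ?I = "?W \<inter> (A + ?B')"
  have A': "linear_code n ?A'" and B': "linear_code n ?B'"
    using linear_code_sesq_dual linear_code_carrier[OF A] linear_code_carrier[OF B] by auto
  have W: "linear_code n ?W" using linear_code_Int[OF B A'] .
  have L: "linear_code n ?L" using linear_code_Int[OF B B'] .
  have I: "linear_code n ?I" using linear_code_Int[OF W linear_code_set_plus[OF A B']] .
  have h: "h = t + code_dim n ?I"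
    unfolding h_def t_def using code_dim_hull_uuv[OF A B sesq_form_double_eq_zero[OF cond]] by simp
  have w: "code_dim n ?W + code_dim n A = code_dim n B + t"
    unfolding t_def using code_dim_Int_sesq_dual[OF A B] .
  have "code_dim n ?I \<le> code_dim n ?W"
    using code_dim_mono[OF I W Int_lower1] .
  then show "int h \<le> 2 * int t + int (code_dim n B) - int (code_dim n A)"
    using h w by linarith
  have B'_sub: "?B' \<subseteq> A + ?B'" using subset_set_plus_linear_code(2)[OF A B'] .
  have "code_dim n (?L + ?W) + code_dim n (?L \<inter> ?W) = code_dim n ?L + code_dim n ?W"
    using code_dim_set_plus_Int[OF L W] .
  moreover have "code_dim n (?L + ?W) \<le> code_dim n B"
    using code_dim_mono[OF linear_code_set_plus[OF L W] B set_plus_subset_linear_code[OF B Int_lower1 Int_lower1]] .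
  moreover have "code_dim n (?L \<inter> ?W) \<le> code_dim n ?I"
  proof (rule code_dim_mono[OF linear_code_Int[OF L W] I])
    show "?L \<inter> ?W \<subseteq> ?I" using B'_sub by blast
  qed
  ultimately show "2 * int t + int (code_dim n ?L) - int (code_dim n A) \<le> int h"
    using h w by linarith
  assume "B \<subseteq> ?B'"
  then have "?I = ?W" using B'_sub by blast
  then show "int h = 2 * int t + int (code_dim n B) - int (code_dim n A)"
    using h w by simp
qed

end

lemma hull_E_uuv_bounds:
  fixes C\<^sub>1 C\<^sub>2 :: "'a::{finite,field} vec set"
  assumes C\<^sub>1: "linear_code n C\<^sub>1" and C\<^sub>2: "linear_code n C\<^sub>2"
    and cond: "(\<exists>m. card (UNIV :: 'a set) = 2 ^ m) \<or> self_orth_E n C\<^sub>1"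
  defines "h \<equiv> code_dim (2 * n) (hull_E (2 * n) (uuv C\<^sub>1 C\<^sub>2))"
    and "t \<equiv> code_dim n (C\<^sub>1 \<inter> dual_E n C\<^sub>2)"
  shows "2 * int t + int (code_dim n (hull_E n C\<^sub>2)) - int (code_dim n C\<^sub>1) \<le> int h"
    and "int h \<le> 2 * int t + int (code_dim n C\<^sub>2) - int (code_dim n C\<^sub>1)"
    and "self_orth_E n C\<^sub>2 \<Longrightarrow> int h = 2 * int t + int (code_dim n C\<^sub>2) - int (code_dim n C\<^sub>1)"
  using finite_field_involution.code_dim_hull_uuv_bounds[OF finite_field_involution_id C\<^sub>1 C\<^sub>2] cond
  unfolding h_def t_def hull_E_def self_orth_E_def dual_E_eq_sesq_dual by blast+

lemma hull_H_uuv_bounds: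
  fixes C\<^sub>1 C\<^sub>2 :: "'a::{finite,field} vec set"
  assumes C\<^sub>1: "linear_code n C\<^sub>1" and C\<^sub>2: "linear_code n C\<^sub>2"
    and q: "prime p" "even e" "card (UNIV :: 'a set) = p ^ e" and r: "r = p ^ (e div 2)"
    and cond: "(\<exists>m. card (UNIV :: 'a set) = 2 ^ m) \<or> self_orth_H r n C\<^sub>1"
  defines "h \<equiv> code_dim (2 * n) (hull_H r (2 * n) (uuv C\<^sub>1 C\<^sub>2))"
    and "t \<equiv> code_dim n (C\<^sub>1 \<inter> dual_H r n C\<^sub>2)"
  shows "2 * int t + int (code_dim n (hull_H r n C\<^sub>2)) - int (code_dim n C\<^sub>1) \<le> int h"
    and "int h \<le> 2 * int t + int (code_dim n C\<^sub>2) - int (code_dim n C\<^sub>1)"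
    and "self_orth_H r n C\<^sub>2 \<Longrightarrow> int h = 2 * int t + int (code_dim n C\<^sub>2) - int (code_dim n C\<^sub>1)"
proof -
  have carrier: "C\<^sub>1 \<subseteq> carrier_vec n" "C\<^sub>2 \<subseteq> carrier_vec n"
    using linear_code_carrier[OF C\<^sub>1] linear_code_carrier[OF C\<^sub>2] by auto
  note dual_H = dual_H_eq_sesq_dual[OF carrier(1)] dual_H_eq_sesq_dual[OF carrier(2)]
    dual_H_eq_sesq_dual[OF uuv_carrier[OF carrier]]
  show "2 * int t + int (code_dim n (hull_H r n C\<^sub>2)) - int (code_dim n C\<^sub>1) \<le> int h"
    and "int h \<le> 2 * int t + int (code_dim n C\<^sub>2) - int (code_dim n C\<^sub>1)"
    and "self_orth_H r n C\<^sub>2 \<Longrightarrow> int h = 2 * int t + int (code_dim n C\<^sub>2) - int (code_dim n C\<^sub>1)"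
    using finite_field_involution.code_dim_hull_uuv_bounds[OF
        finite_field_involution_frobenius[OF q] C\<^sub>1 C\<^sub>2, folded r] cond
    unfolding h_def t_def hull_H_def self_orth_H_def dual_H by blast+
qed

theorem theorem2:
  fixes C1 C2 :: "'a::{finite,field} vec set" and G1 G2 :: "'a mat"
    and n k1 k2 d1 d2 :: nat
  assumes C1: "is_code n k1 d1 C1" and C2: "is_code n k2 d2 C2"
    and G1: "is_gen_matrix n k1 G1 C1" and G2: "is_gen_matrix n k2 G2 C2"
  shows
    "(is_code (2 * n) (k1 + k2) (min (2 * d1) d2) (uuv C1 C2) \<and>
      is_gen_matrix (2 * n) (k1 + k2) (four_block_mat G1 G1 (0\<^sub>m k2 n) G2) (uuv C1 C2))
   \<and>
    (((\<exists>m. card (UNIV :: 'a set) = 2 ^ m) \<or> self_orth_E n C1) \<longrightarrow>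
      (2 * int (code_dim n (C1 \<inter> dual_E n C2)) + int (code_dim n (hull_E n C2)) - int k1
         \<le> int (code_dim (2 * n) (hull_E (2 * n) (uuv C1 C2))) \<and>
       int (code_dim (2 * n) (hull_E (2 * n) (uuv C1 C2)))
         \<le> 2 * int (code_dim n (C1 \<inter> dual_E n C2)) + int k2 - int k1 \<and>
       (self_orth_E n C2 \<longrightarrow>
          int (code_dim (2 * n) (hull_E (2 * n) (uuv C1 C2)))
            = 2 * int (code_dim n (C1 \<inter> dual_E n C2)) + int k2 - int k1)))
   \<and>
    (\<forall>p h. prime (p::nat) \<and> even h \<and> card (UNIV :: 'a set) = p ^ h \<longrightarrow>
      (let r = p ^ (h div 2) in
       ((\<exists>m. card (UNIV :: 'a set) = 2 ^ m) \<or> self_orth_H r n C1) \<longrightarrow>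
        (2 * int (code_dim n (C1 \<inter> dual_H r n C2)) + int (code_dim n (hull_H r n C2)) - int k1
           \<le> int (code_dim (2 * n) (hull_H r (2 * n) (uuv C1 C2))) \<and>
         int (code_dim (2 * n) (hull_H r (2 * n) (uuv C1 C2)))
           \<le> 2 * int (code_dim n (C1 \<inter> dual_H r n C2)) + int k2 - int k1 \<and>
         (self_orth_H r n C2 \<longrightarrow>
            int (code_dim (2 * n) (hull_H r (2 * n) (uuv C1 C2)))
              = 2 * int (code_dim n (C1 \<inter> dual_H r n C2)) + int k2 - int k1))))"
proof -
  have lin: "linear_code n C1" "linear_code n C2"
    and dim: "code_dim n C1 = k1" "code_dim n C2 = k2"
    and dist: "min_distance C1 d1" "min_distance C2 d2"
    using C1 C2 unfolding is_code_def by auto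
  have "is_code (2 * n) (k1 + k2) (min (2 * d1) d2) (uuv C1 C2)"
    unfolding is_code_def
    using linear_code_uuv[OF lin] code_dim_uuv[OF lin] min_distance_uuv[OF lin dist] dim by simp
  then show ?thesis
    using is_gen_matrix_uuv[OF lin G1 G2] hull_E_uuv_bounds[OF lin] hull_H_uuv_bounds[OF lin _ _ _ refl]
    unfolding dim by (simp add: Let_def)
qed

end
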